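(* Let $\pi$ be a set of primes, $G$ a finite group with the property $C_\pi$, $A$ a normal subgroup of $G$, $H$ a $\pi$-Hall subgroup of $G$, and assume $HA\trianglelefteq G$. Then $k_\pi^G(A)=k_\pi^{HA}(A)$.
   Context: All groups are finite. A subgroup $H$ of $G$ is a $\pi$-Hall subgroup if all prime divisors of $|H|$ lie in $\pi$ and no prime divisor of $|G:H|$ lies in $\pi$. $G$ has the property $E_\pi$ if it contains a $\pi$-Hall subgroup; $G$ has the property $C_\pi$ if it has $E_\pi$ and any two $\pi$-Hall subgroups of $G$ are conjugate in $G$. For a subnormal subgroup $A$ of a group $G$ with property $E_\pi$, a $G$-induced $\pi$-Hall subgroup of $A$ is a subgroup $K\cap A$ with $K$ a $\pi$-Hall subgroup of $G$; an $A$-class of $G$-induced $\pi$-Hall subgroups is a set $\{(K\cap A)^x\mid x\in A\}$ with $K$ a $\pi$-Hall subgroup of $G$; and $k_\pi^G(A)$ denotes the number of distinct $A$-classes of $G$-induced $\pi$-Hall subgroups of $A$. *)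

theory Defs
  imports "HOL-Algebra.Algebra" "HOL-Computational_Algebra.Primes"
begin

definition pi_hall :: "('a, 'b) monoid_scheme \<Rightarrow> nat set \<Rightarrow> 'a set \<Rightarrow> bool" where
  "pi_hall G \<pi> H \<longleftrightarrow> subgroup H G
     \<and> (\<forall>p. Factorial_Ring.prime p \<and> p dvd card H \<longrightarrow> p \<in> \<pi>)
     \<and> (\<forall>p. Factorial_Ring.prime p \<and> p dvd card (rcosets\<^bsub>G\<^esub> H) \<longrightarrow> p \<notin> \<pi>)"

definition E_pi :: "('a, 'b) monoid_scheme \<Rightarrow> nat set \<Rightarrow> bool" where
  "E_pi G \<pi> \<longleftrightarrow> (\<exists>H. pi_hall G \<pi> H)"

definition conj_set :: "('a, 'b) monoid_scheme \<Rightarrow> 'a set \<Rightarrow> 'a \<Rightarrow> 'a set" where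
  "conj_set G S y = (\<lambda>z. y \<otimes>\<^bsub>G\<^esub> z \<otimes>\<^bsub>G\<^esub> inv\<^bsub>G\<^esub> y) ` S"

definition C_pi :: "('a, 'b) monoid_scheme \<Rightarrow> nat set \<Rightarrow> bool" where
  "C_pi G \<pi> \<longleftrightarrow> E_pi G \<pi> \<and>
     (\<forall>H K. pi_hall G \<pi> H \<and> pi_hall G \<pi> K \<longrightarrow> (\<exists>g\<in>carrier G. K = conj_set G H g))"

definition induced_class :: "('a, 'b) monoid_scheme \<Rightarrow> 'a set \<Rightarrow> 'a set \<Rightarrow> 'a set set" where
  "induced_class G A K = {conj_set G (K \<inter> A) x | x. x \<in> A}"

definition k_pi :: "('a, 'b) monoid_scheme \<Rightarrow> nat set \<Rightarrow> 'a set \<Rightarrow> nat" where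
  "k_pi G \<pi> A = card {induced_class G A K | K. pi_hall G \<pi> K}"

end

theory Submission
  imports Defs
begin

(* Let M = HA.  The theorem says that G and its normal subgroup M produce the same
   A-classes of induced pi-Hall subgroups.  This follows from two observations.
   (1) G and M have exactly the same pi-Hall subgroups.  Since G has C_pi, every
       pi-Hall subgroup of G is a conjugate of H, hence lies in the normal subgroup M,
       and by multiplicativity of indices |G:K| = |G:M| |M:K| it is pi-Hall in M.
       Conversely, |G:M| divides |G:H| and is therefore a pi'-number, so a pi-Hall
       subgroup of M is pi-Hall in G.
   (2) Conjugation by elements of A is computed identically in G and in M, so each
       A-class of induced subgroups is the same set whether read in G or in M. *)

lemma index_tower:
  assumes G: "group G" and fin: "finite (carrier G)"
    and M: "subgroup M G" and K: "subgroup K (G\<lparr>carrier := M\<rparr>)"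
  shows "card (rcosets\<^bsub>G\<^esub> K) = card (rcosets\<^bsub>G\<^esub> M) * card (rcosets\<^bsub>G\<lparr>carrier := M\<rparr>\<^esub> K)"
proof -
  interpret group G by (rule G)
  have KG: "subgroup K G" using incl_subgroup[OF M K] .
  have "finite K" using KG fin subgroup.subset finite_subset by metis
  moreover have "K \<noteq> {}" using KG subgroup.one_closed by blast
  ultimately have pos: "card K > 0" by (simp add: card_gt_0_iff)
  have "card (rcosets\<^bsub>G\<^esub> K) * card K = order G" using lagrange[OF KG] .
  also have "\<dots> = card (rcosets\<^bsub>G\<^esub> M) * card M" using lagrange[OF M] by simp
  also have "card M = card (rcosets\<^bsub>G\<lparr>carrier := M\<rparr>\<^esub> K) * card K"
    using group.lagrange[OF subgroup.subgroup_is_group[OF M G] K] by (simp add: order_def)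
  finally show ?thesis using pos by simp
qed

(* A pi-Hall subgroup of G lying in a subgroup M is a pi-Hall subgroup of M:
   its index in M divides its index in G. *)
lemma pi_hall_restrict:
  assumes G: "group G" and fin: "finite (carrier G)"
    and M: "subgroup M G" and K: "pi_hall G \<pi> K" and KM: "K \<subseteq> M"
  shows "pi_hall (G\<lparr>carrier := M\<rparr>) \<pi> K"
proof -
  have KMs: "subgroup K (G\<lparr>carrier := M\<rparr>)"
    using group.subgroup_incl[OF G _ M KM] K unfolding pi_hall_def by blast
  have "card (rcosets\<^bsub>G\<lparr>carrier := M\<rparr>\<^esub> K) dvd card (rcosets\<^bsub>G\<^esub> K)"
    using index_tower[OF G fin M KMs] by simp
  then show ?thesis using K KMs unfolding pi_hall_def by (meson dvd_trans)
qed

(* Conversely, if M contains some pi-Hall subgroup H of G, then |G:M| divides |G:H| and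
   is a pi'-number, so every pi-Hall subgroup of M is a pi-Hall subgroup of G. *)
lemma pi_hall_extend:
  assumes G: "group G" and fin: "finite (carrier G)"
    and M: "subgroup M G" and H: "pi_hall G \<pi> H" and HM: "H \<subseteq> M"
    and K: "pi_hall (G\<lparr>carrier := M\<rparr>) \<pi> K"
  shows "pi_hall G \<pi> K"
proof -
  have KMs: "subgroup K (G\<lparr>carrier := M\<rparr>)" using K unfolding pi_hall_def by blast
  have HMs: "subgroup H (G\<lparr>carrier := M\<rparr>)"
    using group.subgroup_incl[OF G _ M HM] H unfolding pi_hall_def by blast
  have M_pi': "p \<notin> \<pi>" if "Factorial_Ring.prime p" "p dvd card (rcosets\<^bsub>G\<^esub> M)" for p
  proof -
    have "p dvd card (rcosets\<^bsub>G\<^esub> H)" using that(2) index_tower[OF G fin M HMs] by simp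
    then show ?thesis using H that(1) unfolding pi_hall_def by blast
  qed
  have "p \<notin> \<pi>" if p: "Factorial_Ring.prime p" "p dvd card (rcosets\<^bsub>G\<^esub> K)" for p
  proof -
    have "p dvd card (rcosets\<^bsub>G\<^esub> M) \<or> p dvd card (rcosets\<^bsub>G\<lparr>carrier := M\<rparr>\<^esub> K)"
      using p index_tower[OF G fin M KMs] prime_dvd_mult_iff by metis
    then show ?thesis using M_pi' K p(1) unfolding pi_hall_def by blast
  qed
  then show ?thesis using K group.incl_subgroup[OF G M KMs] unfolding pi_hall_def by blast
qed

(* In a C_pi group, a normal subgroup containing one pi-Hall subgroup contains all of
   them, because they are all conjugate. *)
lemma pi_hall_in_normal_overgroup:
  assumes G: "group G" and C: "C_pi G \<pi>"
    and H: "pi_hall G \<pi> H" and M: "M \<lhd> G" and HM: "H \<subseteq> M"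
    and K: "pi_hall G \<pi> K"
  shows "K \<subseteq> M"
proof
  fix k assume "k \<in> K"
  obtain g where g: "g \<in> carrier G" "K = conj_set G H g"
    using C H K unfolding C_pi_def by blast
  then obtain h where "h \<in> H" "k = g \<otimes>\<^bsub>G\<^esub> h \<otimes>\<^bsub>G\<^esub> inv\<^bsub>G\<^esub> g"
    using \<open>k \<in> K\<close> unfolding conj_set_def by auto
  then show "k \<in> M" using normal.inv_op_closed2[OF M g(1)] HM by auto
qed

lemma pi_hall_normal_overgroup_iff:
  assumes G: "group G" and fin: "finite (carrier G)" and C: "C_pi G \<pi>"
    and H: "pi_hall G \<pi> H" and M: "M \<lhd> G" and HM: "H \<subseteq> M"
  shows "pi_hall (G\<lparr>carrier := M\<rparr>) \<pi> K \<longleftrightarrow> pi_hall G \<pi> K"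
  using pi_hall_extend[OF G fin _ H HM] pi_hall_restrict[OF G fin]
    pi_hall_in_normal_overgroup[OF G C H M HM] normal_imp_subgroup[OF M] by blast

(* Conjugating by elements of A gives the same A-classes in G and in any subgroup
   M containing A, since M inherits the multiplication and inverses of G. *)
lemma induced_class_restrict:
  assumes G: "group G" and M: "subgroup M G" and AM: "A \<subseteq> M"
  shows "induced_class (G\<lparr>carrier := M\<rparr>) A K = induced_class G A K"
proof -
  have "conj_set (G\<lparr>carrier := M\<rparr>) (K \<inter> A) x = conj_set G (K \<inter> A) x" if "x \<in> A" for x
    using group.m_inv_consistent[OF G M] that AM unfolding conj_set_def by auto
  then show ?thesis unfolding induced_class_def by blast
qed

lemma subgroups_in_set_mult:
  assumes G: "group G" and H: "subgroup H G" and A: "subgroup A G"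
  shows "H \<subseteq> H <#>\<^bsub>G\<^esub> A" and "A \<subseteq> H <#>\<^bsub>G\<^esub> A"
proof -
  show "H \<subseteq> H <#>\<^bsub>G\<^esub> A"
  proof
    fix h assume "h \<in> H"
    then have "h \<otimes>\<^bsub>G\<^esub> \<one>\<^bsub>G\<^esub> \<in> H <#>\<^bsub>G\<^esub> A"
      unfolding set_mult_def using subgroup.one_closed[OF A] by blast
    then show "h \<in> H <#>\<^bsub>G\<^esub> A"
      using \<open>h \<in> H\<close> subgroup.mem_carrier[OF H] monoid.r_one[OF group.is_monoid[OF G]] by metis
  qed
  show "A \<subseteq> H <#>\<^bsub>G\<^esub> A"
  proof
    fix a assume "a \<in> A"
    then have "\<one>\<^bsub>G\<^esub> \<otimes>\<^bsub>G\<^esub> a \<in> H <#>\<^bsub>G\<^esub> A"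
      unfolding set_mult_def using subgroup.one_closed[OF H] by blast
    then show "a \<in> H <#>\<^bsub>G\<^esub> A"
      using \<open>a \<in> A\<close> subgroup.mem_carrier[OF A] monoid.l_one[OF group.is_monoid[OF G]] by metis
  qed
qed

theorem lemma7:
  fixes G :: "('a, 'b) monoid_scheme" and \<pi> :: "nat set" and A H :: "'a set"
  assumes "group G" and "finite (carrier G)"
    and "\<forall>p\<in>\<pi>. Factorial_Ring.prime p"
    and "C_pi G \<pi>"
    and "A \<lhd> G"
    and "pi_hall G \<pi> H"
    and "(H <#>\<^bsub>G\<^esub> A) \<lhd> G"
  shows "k_pi G \<pi> A = k_pi (G\<lparr>carrier := H <#>\<^bsub>G\<^esub> A\<rparr>) \<pi> A"
proof -
  define M where "M = H <#>\<^bsub>G\<^esub> A"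
  have M_normal: "M \<lhd> G" using assms(7) M_def by simp
  have HM: "H \<subseteq> M" and AM: "A \<subseteq> M"
    using subgroups_in_set_mult[OF assms(1) _ normal_imp_subgroup[OF assms(5)]] assms(6)
    unfolding M_def pi_hall_def by blast+
  have same_halls: "pi_hall (G\<lparr>carrier := M\<rparr>) \<pi> K \<longleftrightarrow> pi_hall G \<pi> K" for K
    using pi_hall_normal_overgroup_iff[OF assms(1,2,4,6) M_normal HM] .
  have same_classes: "induced_class (G\<lparr>carrier := M\<rparr>) A K = induced_class G A K" for K
    using induced_class_restrict[OF assms(1) normal_imp_subgroup[OF M_normal] AM] .
  show ?thesis unfolding k_pi_def M_def[symmetric] same_halls same_classes ..
qed

end
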